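(* Fix $f\in\mathbb{N}$, $\ell=2f+1$. For a family of directed graphs $G=(V,E)$ with $n=|V|\to\infty$, each with a partition of $V$ into regions $R_1,\dots,R_k$, let $R=\max_{k'}|R_{k'}|$, $r=\min_{k'}|R_{k'}|$, and consider the region-based Byzantine reinforcement $G'$, $P$, $A'$ (as defined in the context). Let $F'\subseteq V'$ contain each node independently with probability $p=p(n)$ (Byzantine faults), and assume $Rp\in o(1)$. (a) If $p\in o\big((n/r)^{-1/(f+1)}/R\big)$, the reinforcement is valid under $\mathrm{Byz}(p)$: with probability $1-o(1)$, for every region $R_{k'}$ there are at least $f+1$ indices $i\in[\ell]$ with $\{v_i:v\in R_{k'}\}\cap F'=\emptyset$, and hence $A'$ simulates $A$. (b) If $G$ contains $\Omega(n)$ nodes with non-zero outdegree, $R\in O(1)$, and $p\in\omega(n^{-1/(f+1)})$, then with probability $1-o(1)$ some node with non-zero outdegree has more than $f$ faulty copies, and the reinforcement is not valid.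
   Context: Region-based Byzantine reinforcement: $V'=V\times[\ell]$, $v_i=(v,i)$, $P(v_i)=v$, $E'=\bigcup_{e\in E}E'_e$ with, for $e=(v,w)\in E$, $E'_e=\{(v_i,w_i):i\in[\ell]\}$ if $v,w$ are in the same region and $E'_e=\{(v_i,w_j):i,j\in[\ell]\}$ otherwise. In $A'$, each non-faulty $v'$ keeps a copy of the state of $P(v')$ under $A$, sends on each $(v',w')\in E'$ the message $P(v')$ would send on $(P(v'),P(w'))$, and updates its state as if $P(v')$ received from each in-neighbor $w$ the majority message among those sent to $v'$ by the copies $w'$ of $w$ with $(w',v')\in E'$. Synchronous network model with scheduling algorithm $A$ (each round: send messages on outgoing links based on state, update state from received messages and input). $\mathrm{Byz}(p)$: each node of $V'$ independently faulty with probability $p$, faulty nodes behaving arbitrarily. Simulation under $\mathrm{Byz}(p)$: for each $v\in V$ a strict majority of its copies compute in every round the state of $v$ in the fault-free execution of $A$ (non-faulty copies getting the same input as $v$). Valid: $A'$ simulates $A$ with probability $1-o(1)$ as $n\to\infty$ ($f$ fixed). *)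

theory Defs
  imports "HOL-Probability.Probability" "HOL-Library.Landau_Symbols"
    "HOL-Library.Disjoint_Sets" "HOL-Library.Multiset"
begin

text \<open>A synchronous scheduling algorithm: initial states, the message node v sends on
  link (v,w) given its state, and the state update of v given its state, the messages
  received from its in-neighbours (Some m from in-neighbour w, None otherwise) and its input.\<close>
record ('v,'s,'m,'i) alg =
  a_init :: "'v \<Rightarrow> 's"
  a_send :: "'v \<Rightarrow> 'v \<Rightarrow> 's \<Rightarrow> 'm"
  a_upd  :: "'v \<Rightarrow> 's \<Rightarrow> ('v \<Rightarrow> 'm option) \<Rightarrow> 'i \<Rightarrow> 's"

fun exec :: "('v \<times> 'v) set \<Rightarrow> ('v,'s,'m,'i) alg \<Rightarrow> (nat \<Rightarrow> 'v \<Rightarrow> 'i) \<Rightarrow> nat \<Rightarrow> 'v \<Rightarrow> 's" where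
  "exec E A inp 0 = (\<lambda>v. a_init A v)"
| "exec E A inp (Suc t) = (let st = exec E A inp t in
     (\<lambda>v. a_upd A v (st v)
            (\<lambda>w. if (w, v) \<in> E then Some (a_send A w v (st w)) else None) (inp t v)))"

text \<open>Number of copies: ell = 2f+1; copies of v are (v,i), i < ell; P = fst.\<close>
abbreviation ell :: "nat \<Rightarrow> nat" where "ell f \<equiv> 2 * f + 1"

definition same_region :: "'v set set \<Rightarrow> 'v \<Rightarrow> 'v \<Rightarrow> bool" where
  "same_region Rs v w \<longleftrightarrow> (\<exists>S\<in>Rs. v \<in> S \<and> w \<in> S)"

definition reinf_edges :: "nat \<Rightarrow> 'v set set \<Rightarrow> ('v \<times> 'v) set \<Rightarrow> (('v \<times> nat) \<times> ('v \<times> nat)) set" where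
  "reinf_edges f Rs E = {((v,i),(w,j)). (v,w) \<in> E \<and> i < ell f \<and> j < ell f \<and>
                                         (same_region Rs v w \<longrightarrow> i = j)}"

definition maj :: "('m multiset \<Rightarrow> 'm) \<Rightarrow> 'm multiset \<Rightarrow> 'm" where
  "maj tb M = (if \<exists>m. 2 * count M m > size M then (THE m. 2 * count M m > size M) else tb M)"

text \<open>Execution of the reinforced algorithm A' with faulty set F; adv t w' v' is the
  (arbitrary) message the faulty node w' sends to v' in round t.  The states of faulty
  nodes are irrelevant (they only influence anything through adv).\<close>
fun rexec :: "nat \<Rightarrow> 'v set set \<Rightarrow> ('v \<times> 'v) set \<Rightarrow> ('v,'s,'m,'i) alg \<Rightarrow> ('m multiset \<Rightarrow> 'm)
    \<Rightarrow> ('v \<times> nat) set \<Rightarrow> (nat \<Rightarrow> 'v \<times> nat \<Rightarrow> 'v \<times> nat \<Rightarrow> 'm) \<Rightarrow> (nat \<Rightarrow> 'v \<Rightarrow> 'i)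
    \<Rightarrow> nat \<Rightarrow> 'v \<times> nat \<Rightarrow> 's" where
  "rexec f Rs E A tb F adv inp 0 = (\<lambda>v'. a_init A (fst v'))"
| "rexec f Rs E A tb F adv inp (Suc t) = (let st = rexec f Rs E A tb F adv inp t;
     msg = (\<lambda>w' v'. if w' \<in> F then adv t w' v' else a_send A (fst w') (fst v') (st w')) in
     (\<lambda>v'. a_upd A (fst v') (st v')
        (\<lambda>w. if (w, fst v') \<in> E then
               Some (maj tb (image_mset (\<lambda>w'. msg w' v')
                 (mset_set {w'. fst w' = w \<and> (w', v') \<in> reinf_edges f Rs E})))
             else None)
        (inp t (fst v'))))"

definition simulates :: "nat \<Rightarrow> 'v set \<Rightarrow> ('v \<times> 'v) set \<Rightarrow> 'v set set \<Rightarrow> ('v,'s,'m,'i) alg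
    \<Rightarrow> ('m multiset \<Rightarrow> 'm) \<Rightarrow> ('v \<times> nat) set \<Rightarrow> (nat \<Rightarrow> 'v \<times> nat \<Rightarrow> 'v \<times> nat \<Rightarrow> 'm)
    \<Rightarrow> (nat \<Rightarrow> 'v \<Rightarrow> 'i) \<Rightarrow> bool" where
  "simulates f V E Rs A tb F adv inp \<longleftrightarrow>
     (\<forall>v\<in>V. \<exists>S \<subseteq> {..<ell f}. 2 * card S > ell f \<and>
        (\<forall>i\<in>S. (v, i) \<notin> F \<and> (\<forall>t. rexec f Rs E A tb F adv inp t (v, i) = exec E A inp t v)))"

definition fault_pmf :: "nat \<Rightarrow> 'v set \<Rightarrow> real \<Rightarrow> ('v \<times> nat \<Rightarrow> bool) pmf" where
  "fault_pmf f V p = Pi_pmf (V \<times> {..<ell f}) False (\<lambda>_. bernoulli_pmf p)"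

definition valid :: "nat \<Rightarrow> (nat \<Rightarrow> 'v set) \<Rightarrow> (nat \<Rightarrow> ('v \<times> 'v) set) \<Rightarrow> (nat \<Rightarrow> 'v set set)
    \<Rightarrow> (nat \<Rightarrow> ('v,'s,'m,'i) alg) \<Rightarrow> ('m multiset \<Rightarrow> 'm) \<Rightarrow> (nat \<Rightarrow> real) \<Rightarrow> bool" where
  "valid f V E Rs A tb p \<longleftrightarrow>
     ((\<lambda>j. measure_pmf.prob (fault_pmf f (V j) (p j))
        {x. \<forall>adv inp. simulates f (V j) (E j) (Rs j) (A j) tb {v'. x v'} adv inp}) \<longlonglongrightarrow> 1)"

end

theory Submission
  imports Defs
begin

(* Call the copy index i clean for a region S if no copy v_i with v \<in> S is faulty.  If every
   region has at least f + 1 clean indices, then by induction on the rounds every clean copy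
   computes the fault-free state: inside a region, v_i only listens to w_i, which is clean as
   well; across regions, v_i takes the majority over all 2f + 1 copies of w, among which the
   f + 1 clean ones agree.  A region lacks f + 1 clean indices only if f + 1 distinct indices
   each carry a faulty copy, which by a union bound has probability at most
   (2f+1 choose f+1) (|S| p)^(f+1); summing over the at most n/r regions gives o(1) in case (a).
   In case (b), each of the \<Omega>(n) nodes with an out-edge independently has its first f + 1
   copies faulty with probability p^(f+1), so with probability 1 - exp(-\<Omega>(n p^(f+1))) = 1 - o(1)
   some such node has a faulty majority of copies, and then A' cannot simulate A. *)

abbreviation clean_copies :: "nat \<Rightarrow> ('v \<times> nat \<Rightarrow> bool) \<Rightarrow> 'v set \<Rightarrow> nat set" where
  "clean_copies f x S \<equiv> {i. i < ell f \<and> (\<forall>v\<in>S. \<not> x (v, i))}"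

abbreviation faulty_copies :: "nat \<Rightarrow> ('v \<times> nat \<Rightarrow> bool) \<Rightarrow> 'v \<Rightarrow> nat set" where
  "faulty_copies f x v \<equiv> {i. i < ell f \<and> x (v, i)}"

lemma count_add_count_le_size:
  assumes "a \<noteq> b"
  shows "count M a + count M b \<le> size M"
proof -
  have "replicate_mset (count M a) a + replicate_mset (count M b) b \<subseteq># M"
    unfolding subseteq_mset_def
  proof
    fix y
    show "count (replicate_mset (count M a) a + replicate_mset (count M b) b) y \<le> count M y"
      using assms by (cases "y = a"; cases "y = b") simp_all
  qed
  from size_mset_mono[OF this] show ?thesis by simp
qed

lemma maj_eqI:
  assumes "size M < 2 * count M m"
  shows "maj tb M = m"
proof -
  have "m' = m" if "size M < 2 * count M m'" for m'
    using count_add_count_le_size[of m' m M] that assms by (cases "m' = m") linarith+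
  then have "(THE m. size M < 2 * count M m) = m"
    using assms by (intro the_equality)
  with assms show ?thesis
    unfolding maj_def by auto
qed

lemma partition_on_part_unique:
  assumes "partition_on V Rs" "S \<in> Rs" "S' \<in> Rs" "v \<in> S" "v \<in> S'"
  shows "S = S'"
  using assms partition_onD2 disjointD by blast

lemma reinforced_majority_correct:
  assumes edges: "E \<subseteq> V \<times> V" and part: "partition_on V Rs"
    and clean: "\<forall>S\<in>Rs. f + 1 \<le> card (clean_copies f x S)"
    and S: "S \<in> Rs" "v \<in> S" "i \<in> clean_copies f x S" and wv: "(w, v) \<in> E"
    and correct: "\<And>S u j. S \<in> Rs \<Longrightarrow> u \<in> S \<Longrightarrow> j \<in> clean_copies f x S \<Longrightarrow> st (u, j) = s u"
  shows "maj tb (image_mset (\<lambda>w'. if x w' then adv w' else a_send A (fst w') v (st w'))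
            (mset_set {w'. fst w' = w \<and> (w', (v, i)) \<in> reinf_edges f Rs E}))
         = a_send A w v (s w)"
    (is "maj tb (image_mset ?msg (mset_set ?In)) = ?m")
proof -
  obtain S' where S': "S' \<in> Rs" "w \<in> S'"
    using wv edges partition_onD1[OF part] by blast
  show ?thesis
  proof (cases "same_region Rs w v")
    case True
    then have "S' = S"
      using partition_on_part_unique[OF part] S S' unfolding same_region_def by metis
    moreover have "?In = {(w, i)}"
      using True S(3) wv by (auto simp: reinf_edges_def)
    ultimately show ?thesis
      using S S' correct[of S w i] by (simp add: maj_def)
  next
    case False
    then have In: "?In = (\<lambda>j. (w, j)) ` {..<ell f}"
      using S(3) wv by (auto simp: reinf_edges_def)
    have inj: "inj_on (\<lambda>j. (w, j)) A" for A :: "nat set"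
      by (simp add: inj_on_def)
    have "(\<lambda>j. (w, j)) ` clean_copies f x S' \<subseteq> {w' \<in> ?In. ?msg w' = ?m}"
      using S' correct[OF S'] unfolding In by auto
    then have "card (clean_copies f x S') \<le> card {w' \<in> ?In. ?msg w' = ?m}"
      by (rule card_inj_on_le[OF inj]) (simp add: In)
    also have "\<dots> = count (image_mset ?msg (mset_set ?In)) ?m"
      by (rule count_image_mset_eq_card_vimage[symmetric]) (simp add: In)
    finally have "f + 1 \<le> count (image_mset ?msg (mset_set ?In)) ?m"
      using clean S'(1) by fastforce
    moreover have "size (image_mset ?msg (mset_set ?In)) = ell f"
      unfolding In by (simp add: card_image[OF inj])
    ultimately show ?thesis
      by (intro maj_eqI) linarith
  qed
qed

lemma rexec_clean_copy:
  assumes edges: "E \<subseteq> V \<times> V" and part: "partition_on V Rs"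
    and clean: "\<forall>S\<in>Rs. f + 1 \<le> card (clean_copies f x S)"
    and "S \<in> Rs" "v \<in> S" "i \<in> clean_copies f x S"
  shows "rexec f Rs E A tb {v'. x v'} adv inp t (v, i) = exec E A inp t v"
  using assms(4-6)
proof (induction t arbitrary: S v i)
  case 0
  then show ?case by simp
next
  case (Suc t)
  let ?st = "rexec f Rs E A tb {v'. x v'} adv inp t"
  have "maj tb (image_mset (\<lambda>w'. if x w' then adv t w' (v, i) else a_send A (fst w') v (?st w'))
          (mset_set {w'. fst w' = w \<and> (w', (v, i)) \<in> reinf_edges f Rs E}))
        = a_send A w v (exec E A inp t w)" if "(w, v) \<in> E" for w
    using Suc.IH
    by (rule reinforced_majority_correct[OF edges part clean Suc.prems that, where s = "exec E A inp t"])
  then show ?case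
    by (simp add: Let_def Suc.IH[OF Suc.prems] cong: if_cong)
qed

lemma simulates_if_all_regions_clean:
  assumes "E \<subseteq> V \<times> V" "partition_on V Rs" "\<forall>S\<in>Rs. f + 1 \<le> card (clean_copies f x S)"
  shows "simulates f V E Rs A tb {v'. x v'} adv inp"
  unfolding simulates_def
proof
  fix v assume "v \<in> V"
  then obtain S where S: "S \<in> Rs" "v \<in> S"
    using partition_onD1[OF assms(2)] by blast
  have "\<forall>i\<in>clean_copies f x S. (v, i) \<notin> {v'. x v'} \<and>
          (\<forall>t. rexec f Rs E A tb {v'. x v'} adv inp t (v, i) = exec E A inp t v)"
    using S rexec_clean_copy[OF assms S] by blast
  moreover have "ell f < 2 * card (clean_copies f x S)"
    using assms(3) S by fastforce
  ultimately show "\<exists>T\<subseteq>{..<ell f}. ell f < 2 * card T \<and>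
          (\<forall>i\<in>T. (v, i) \<notin> {v'. x v'} \<and> (\<forall>t. rexec f Rs E A tb {v'. x v'} adv inp t (v, i) = exec E A inp t v))"
    by (intro exI[of _ "clean_copies f x S"]) auto
qed

lemma not_simulates_if_faulty_majority:
  assumes "v \<in> V" and "f < card (faulty_copies f x v)"
  shows "\<not> simulates f V E Rs A tb {v'. x v'} adv inp"
proof
  assume "simulates f V E Rs A tb {v'. x v'} adv inp"
  then obtain T where T: "T \<subseteq> {..<ell f}" "ell f < 2 * card T" "\<forall>i\<in>T. \<not> x (v, i)"
    using assms(1) unfolding simulates_def by fastforce
  then have "card T + card (faulty_copies f x v) = card (T \<union> faulty_copies f x v)"
    using finite_subset[OF T(1)] by (intro card_Un_disjoint[symmetric]) auto
  also have "\<dots> \<le> ell f"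
    using T(1) card_mono[of "{..<ell f}" "T \<union> faulty_copies f x v"] by auto
  finally have "card T + card (faulty_copies f x v) \<le> ell f" .
  with assms(2) T(2) show False
    by linarith
qed

lemma measure_Pi_pmf_bernoulli_all_True:
  assumes "finite A" "D \<subseteq> A" "0 \<le> p" "p \<le> 1"
  shows "measure_pmf.prob (Pi_pmf A False (\<lambda>_. bernoulli_pmf p)) {x. \<forall>d\<in>D. x d} = p ^ card D"
proof -
  have "{x. \<forall>d\<in>D. x d} = Pi A (\<lambda>a. if a \<in> D then {True} else UNIV)"
    using assms(2) by (auto simp: Pi_def)
  then have "measure_pmf.prob (Pi_pmf A False (\<lambda>_. bernoulli_pmf p)) {x. \<forall>d\<in>D. x d}
     = (\<Prod>a\<in>A. measure_pmf.prob (bernoulli_pmf p) (if a \<in> D then {True} else UNIV))"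
    using assms(1) by (simp add: measure_Pi_pmf_Pi)
  also have "\<dots> = (\<Prod>a\<in>A. if a \<in> D then p else 1)"
    using assms(3,4) by (intro prod.cong) (auto simp: measure_pmf_single)
  also have "\<dots> = p ^ card D"
    using assms(1,2) by (simp add: prod.If_cases Int_absorb1)
  finally show ?thesis .
qed

lemma measure_pair_pmf_Times:
  "measure_pmf.prob (pair_pmf M N) (A \<times> B) = measure_pmf.prob M A * measure_pmf.prob N B"
proof -
  have "measure_pmf.prob (pair_pmf M N) (A \<times> B)
      = measure_pmf.prob (pair_pmf M N) ((A \<inter> set_pmf M) \<times> (B \<inter> set_pmf N))"
    using measure_Int_set_pmf[of "pair_pmf M N" "A \<times> B"] by (simp add: Times_Int_Times)
  also have "\<dots> = measure_pmf.prob M (A \<inter> set_pmf M) * measure_pmf.prob N (B \<inter> set_pmf N)"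
    by (intro measure_pmf_prob_product) auto
  finally show ?thesis
    by (simp add: measure_Int_set_pmf)
qed

lemma measure_Pi_pmf_Times_blocks:
  assumes "finite W" "finite I"
  shows "measure_pmf.prob (Pi_pmf (W \<times> I) d (\<lambda>_. q)) {x. \<forall>w\<in>W. Q w (\<lambda>i. x (w, i))}
       = (\<Prod>w\<in>W. measure_pmf.prob (Pi_pmf I d (\<lambda>_. q)) {y. Q w y})"
  using assms(1)
proof (induction rule: finite_induct)
  case empty
  then show ?case by simp
next
  case (insert w W)
  let ?M = "Pi_pmf ({w} \<times> I) d (\<lambda>_. q)"
  let ?N = "Pi_pmf (W \<times> I) d (\<lambda>_. q)"
  let ?h = "\<lambda>(g, h) z. if z \<in> {w} \<times> I then g z else h z"
  let ?E = "\<lambda>W. {x. \<forall>w\<in>W. Q w (\<lambda>i. x (w, i))}"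
  let ?A = "{g. Q w (\<lambda>i. g (w, i))}"
  have blocks: "insert w W \<times> I = ({w} \<times> I) \<union> (W \<times> I)" by auto
  have split: "Pi_pmf (insert w W \<times> I) d (\<lambda>_. q) = map_pmf ?h (pair_pmf ?M ?N)"
    unfolding blocks using insert.hyps assms(2) by (intro Pi_pmf_union) auto
  have key: "z \<in> ?h -` ?E (insert w W) \<longleftrightarrow> z \<in> ?A \<times> ?E W" if z: "z \<in> set_pmf (pair_pmf ?M ?N)" for z
  proof -
    obtain g h where z: "z = (g, h)" "g \<in> set_pmf ?M" "h \<in> set_pmf ?N"
      using z unfolding set_pair_pmf by blast
    have "g (w, i) = ?h z (w, i)" "w' \<in> W \<Longrightarrow> h (w', i) = ?h z (w', i)" for i w'
      using set_Pi_pmf_subset[of "{w} \<times> I" d "\<lambda>_. q"] set_Pi_pmf_subset[of "W \<times> I" d "\<lambda>_. q"]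
        insert.hyps assms(2) z by (auto simp: subset_iff)
    then show ?thesis
      using z(1) by (auto simp del: split_paired_All)
  qed
  have "measure_pmf.prob (pair_pmf ?M ?N) (?h -` ?E (insert w W))
           = measure_pmf.prob (pair_pmf ?M ?N) (?A \<times> ?E W)"
    by (rule measure_prob_cong_0) (use key in \<open>meson DiffD1 DiffD2 set_pmf_iff\<close>)+
  moreover have "Pi_pmf I d (\<lambda>_. q) = map_pmf (\<lambda>g. g \<circ> Pair w) ?M"
    using assms(2) by (intro Pi_pmf_bij_betw) (auto simp: bij_betw_def inj_on_def)
  ultimately show ?case
    using insert by (simp add: split measure_pair_pmf_Times vimage_def o_def)
qed

lemma faulty_transversal_if_few_clean_copies:
  assumes "card (clean_copies f x S) < f + 1"
  obtains I g where "I \<subseteq> {..<ell f}" "card I = f + 1" "g \<in> I \<rightarrow>\<^sub>E S" "\<forall>i\<in>I. x (g i, i)"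
proof -
  let ?D = "{i. i < ell f \<and> (\<exists>v\<in>S. x (v, i))}"
  have "?D = {..<ell f} - clean_copies f x S"
    by auto
  then have "card ?D = ell f - card (clean_copies f x S)"
    by (simp add: card_Diff_subset subset_eq)
  with assms have "f + 1 \<le> card ?D"
    by linarith
  then obtain I where I: "I \<subseteq> ?D" "card I = f + 1"
    by (rule obtain_subset_with_card_n)
  then obtain g where "\<forall>i\<in>I. g i \<in> S \<and> x (g i, i)"
    using bchoice[of I "\<lambda>i v. v \<in> S \<and> x (v, i)"] by blast
  with I show thesis
    by (intro that[of I "restrict g I"]) auto
qed

lemma prob_region_not_clean_le:
  assumes "finite V" "S \<subseteq> V" "0 \<le> p" "p \<le> 1"
  shows "measure_pmf.prob (fault_pmf f V p) {x. card (clean_copies f x S) < f + 1}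
         \<le> real (ell f choose (f + 1)) * (real (card S) * p) ^ (f + 1)"
proof -
  let ?M = "fault_pmf f V p"
  let ?K = "{I. I \<subseteq> {..<ell f} \<and> card I = f + 1}"
  let ?Ev = "\<lambda>I g. {x. \<forall>d\<in>(\<lambda>i. (g i, i)) ` I. x d}"
  have finS: "finite S"
    using assms(1,2) finite_subset by blast
  have finK: "finite ?K"
    by (rule finite_subset[of _ "Pow {..<ell f}"]) auto
  have "{x. card (clean_copies f x S) < f + 1} \<subseteq> (\<Union>I\<in>?K. \<Union>g\<in>I \<rightarrow>\<^sub>E S. ?Ev I g)"
  proof
    fix x assume "x \<in> {x. card (clean_copies f x S) < f + 1}"
    then obtain I g where "I \<subseteq> {..<ell f}" "card I = f + 1" "g \<in> I \<rightarrow>\<^sub>E S" "\<forall>i\<in>I. x (g i, i)"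
      using faulty_transversal_if_few_clean_copies by blast
    then show "x \<in> (\<Union>I\<in>?K. \<Union>g\<in>I \<rightarrow>\<^sub>E S. ?Ev I g)"
      by blast
  qed
  then have "measure_pmf.prob ?M {x. card (clean_copies f x S) < f + 1}
        \<le> measure_pmf.prob ?M (\<Union>I\<in>?K. \<Union>g\<in>I \<rightarrow>\<^sub>E S. ?Ev I g)"
    by (intro measure_pmf.finite_measure_mono) auto
  also have "\<dots> \<le> (\<Sum>I\<in>?K. \<Sum>g\<in>I \<rightarrow>\<^sub>E S. measure_pmf.prob ?M (?Ev I g))"
    using finK finS
    by (intro order.trans[OF measure_pmf.finite_measure_subadditive_finite] sum_mono
        measure_pmf.finite_measure_subadditive_finite) (auto intro!: finite_PiE intro: finite_subset)
  also have "\<dots> = (\<Sum>I\<in>?K. \<Sum>g\<in>I \<rightarrow>\<^sub>E S. p ^ (f + 1))"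
  proof (intro sum.cong refl)
    fix I g assume I: "I \<in> ?K" and g: "g \<in> I \<rightarrow>\<^sub>E S"
    have "inj_on (\<lambda>i. (g i, i)) I"
      by (auto simp: inj_on_def)
    moreover have "(\<lambda>i. (g i, i)) ` I \<subseteq> V \<times> {..<ell f}"
      using I g assms(2) by auto
    ultimately show "measure_pmf.prob ?M (?Ev I g) = p ^ (f + 1)"
      using I assms unfolding fault_pmf_def
      by (subst measure_Pi_pmf_bernoulli_all_True) (auto simp: card_image)
  qed
  also have "\<dots> = (\<Sum>I\<in>?K. real (card S) ^ (f + 1) * p ^ (f + 1))"
  proof (intro sum.cong refl)
    fix I assume "I \<in> ?K"
    then have "finite I" "card I = f + 1"
      using finite_subset by auto
    then show "(\<Sum>g\<in>I \<rightarrow>\<^sub>E S. p ^ (f + 1)) = real (card S) ^ (f + 1) * p ^ (f + 1)"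
      by (simp add: card_PiE)
  qed
  also have "\<dots> = real (ell f choose (f + 1)) * (real (card S) * p) ^ (f + 1)"
    by (simp add: n_subsets power_mult_distrib)
  finally show ?thesis .
qed

lemma prob_all_regions_clean_ge:
  assumes "finite V" "partition_on V Rs" "0 \<le> p" "p \<le> 1"
  shows "1 - real (card Rs) * real (ell f choose (f + 1)) * (real (Max (card ` Rs)) * p) ^ (f + 1)
         \<le> measure_pmf.prob (fault_pmf f V p) {x. \<forall>S\<in>Rs. f + 1 \<le> card (clean_copies f x S)}"
proof -
  let ?M = "fault_pmf f V p"
  let ?C = "real (ell f choose (f + 1))"
  let ?Bad = "\<lambda>S. {x. card (clean_copies f x S) < f + 1}"
  have finRs: "finite Rs"
    using assms(1,2) by (rule finite_elements)
  have "measure_pmf.prob ?M (\<Union>S\<in>Rs. ?Bad S) \<le> (\<Sum>S\<in>Rs. measure_pmf.prob ?M (?Bad S))"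
    using finRs by (intro measure_pmf.finite_measure_subadditive_finite) auto
  also have "\<dots> \<le> (\<Sum>S\<in>Rs. ?C * (real (Max (card ` Rs)) * p) ^ (f + 1))"
  proof (intro sum_mono order.trans[OF prob_region_not_clean_le])
    fix S assume S: "S \<in> Rs"
    then show "S \<subseteq> V"
      using partition_onD1[OF assms(2)] by blast
    have "card S \<le> Max (card ` Rs)"
      using finRs S by (intro Max_ge) auto
    then show "?C * (real (card S) * p) ^ (f + 1) \<le> ?C * (real (Max (card ` Rs)) * p) ^ (f + 1)"
      using assms(3) by (intro mult_left_mono power_mono mult_right_mono) auto
  qed (use assms in auto)
  finally have "measure_pmf.prob ?M (\<Union>S\<in>Rs. ?Bad S) \<le> real (card Rs) * ?C * (real (Max (card ` Rs)) * p) ^ (f + 1)"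
    by simp
  moreover have "(\<Union>S\<in>Rs. ?Bad S) = UNIV - {x. \<forall>S\<in>Rs. f + 1 \<le> card (clean_copies f x S)}"
    by (auto simp: not_le)
  ultimately show ?thesis
    using measure_pmf.prob_compl[of "{x. \<forall>S\<in>Rs. f + 1 \<le> card (clean_copies f x S)}" ?M] by simp
qed

lemma prob_no_faulty_majority_le:
  assumes "finite V" "W \<subseteq> V" "0 \<le> p" "p \<le> 1"
  shows "measure_pmf.prob (fault_pmf f V p) {x. \<forall>v\<in>W. card (faulty_copies f x v) \<le> f}
         \<le> (1 - p ^ (f + 1)) ^ card W"
proof -
  let ?M = "fault_pmf f V p"
  let ?N = "Pi_pmf {..<ell f} False (\<lambda>_. bernoulli_pmf p)"
  \<comment> \<open>only the event that the first f + 1 copies of w are all faulty is used\<close>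
  let ?Q = "\<lambda>w (y :: nat \<Rightarrow> bool). w \<in> W \<longrightarrow> \<not> (\<forall>i\<in>{..<f + 1}. y i)"
  have "{x. \<forall>v\<in>W. card (faulty_copies f x v) \<le> f} \<subseteq> {x. \<forall>w\<in>V. ?Q w (\<lambda>i. x (w, i))}"
  proof (safe)
    fix x w assume "\<forall>v\<in>W. card (faulty_copies f x v) \<le> f" "w \<in> W" "\<forall>i\<in>{..<f + 1}. x (w, i)"
    moreover have "card {..<f + 1} \<le> card (faulty_copies f x w)" if "\<forall>i\<in>{..<f + 1}. x (w, i)"
      using that by (intro card_mono) auto
    ultimately show False
      by fastforce
  qed
  then have "measure_pmf.prob ?M {x. \<forall>v\<in>W. card (faulty_copies f x v) \<le> f}
        \<le> measure_pmf.prob ?M {x. \<forall>w\<in>V. ?Q w (\<lambda>i. x (w, i))}"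
    by (intro measure_pmf.finite_measure_mono) auto
  also have "\<dots> = (\<Prod>w\<in>V. measure_pmf.prob ?N {y. ?Q w y})"
    unfolding fault_pmf_def using assms(1) by (intro measure_Pi_pmf_Times_blocks) auto
  also have "\<dots> = (\<Prod>w\<in>V. if w \<in> W then 1 - p ^ (f + 1) else 1)"
  proof (intro prod.cong refl)
    fix w
    have "measure_pmf.prob ?N {y. \<forall>i\<in>{..<f + 1}. y i} = p ^ (f + 1)"
      using measure_Pi_pmf_bernoulli_all_True[of "{..<ell f}" "{..<f + 1}" p] assms(3,4) by simp
    moreover have "{y. ?Q w y} = (if w \<in> W then UNIV - {y. \<forall>i\<in>{..<f + 1}. y i} else UNIV)"
      by auto
    ultimately show "measure_pmf.prob ?N {y. ?Q w y} = (if w \<in> W then 1 - p ^ (f + 1) else 1)"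
      using measure_pmf.prob_compl[of "{y. \<forall>i\<in>{..<f + 1}. y i}" ?N] by simp
  qed
  also have "\<dots> = (1 - p ^ (f + 1)) ^ card W"
    using assms(1,2) by (simp add: prod.If_cases Int_absorb1)
  finally show ?thesis .
qed

lemma divide_powr_root_power:
  fixes y p :: real
  assumes "0 < y"
  shows "(p / y powr (-1 / (real f + 1))) ^ (f + 1) = y * p ^ (f + 1)"
proof -
  let ?a = "1 / (real f + 1)"
  have "(y powr ?a) ^ (f + 1) = (y powr ?a) powr real (f + 1)"
    by (rule powr_realpow[symmetric]) (use assms in simp)
  also have "\<dots> = y"
    using assms by (simp add: powr_powr add.commute)
  finally have root: "(y powr ?a) ^ (f + 1) = y" .
  have "y powr (-1 / (real f + 1)) = inverse (y powr ?a)"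
    by (simp add: powr_minus[symmetric])
  then have "(p / y powr (-1 / (real f + 1))) ^ (f + 1) = p ^ (f + 1) * (y powr ?a) ^ (f + 1)"
    by (simp add: divide_inverse power_mult_distrib del: power_Suc)
  then show ?thesis
    by (simp only: root mult.commute)
qed

lemma one_minus_power_le_exp:
  fixes y :: real
  assumes "0 \<le> y" "y \<le> 1"
  shows "(1 - y) ^ m \<le> exp (- (real m * y))"
proof -
  have "(1 - y) ^ m \<le> exp (- y) ^ m"
    using assms exp_ge_add_one_self[of "- y"] by (intro power_mono) auto
  then show ?thesis
    by (simp add: exp_of_nat_mult[symmetric])
qed

lemma partition_on_card_bounds:
  assumes "finite V" "partition_on V Rs" "V \<noteq> {}"
  shows "1 \<le> Min (card ` Rs)" "Min (card ` Rs) \<le> Max (card ` Rs)"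
    and "card Rs * Min (card ` Rs) \<le> card V"
proof -
  have finRs: "finite Rs"
    using assms(1,2) by (rule finite_elements)
  have neRs: "Rs \<noteq> {}"
    using assms(2,3) partition_onD1 by blast
  have finS: "finite S" and "S \<noteq> {}" if "S \<in> Rs" for S
    using that assms(1,2) partition_onD1[OF assms(2)] partition_onD3[OF assms(2)]
    by (auto intro: finite_subset)
  then show "1 \<le> Min (card ` Rs)"
    using finRs neRs by (auto simp: Suc_le_eq card_gt_0_iff)
  obtain S where "S \<in> Rs"
    using neRs by blast
  then show "Min (card ` Rs) \<le> Max (card ` Rs)"
    using finRs by (meson Max_ge Min_le finite_imageI imageI order.trans)
  have "card Rs * Min (card ` Rs) = (\<Sum>S\<in>Rs. Min (card ` Rs))"
    by simp
  also have "\<dots> \<le> (\<Sum>S\<in>Rs. card S)"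
    using finRs by (intro sum_mono Min_le) auto
  also have "\<dots> = card V"
    using assms(2) finS by (rule product_partition[symmetric])
  finally show "card Rs * Min (card ` Rs) \<le> card V" .
qed

lemma eventually_card_gt_0:
  assumes "filterlim (\<lambda>j. card (A j)) at_top F"
  shows "\<forall>\<^sub>F j in F. 0 < card (A j)"
proof -
  have "\<forall>\<^sub>F j in F. 1 \<le> card (A j)"
    using assms by (simp add: filterlim_at_top)
  then show ?thesis
    by eventually_elim simp
qed

lemma prob_all_regions_clean_tendsto_1:
  assumes fin: "\<And>j. finite (V j)" and part: "\<And>j. partition_on (V j) (Rs j)"
    and prob: "\<And>j. 0 \<le> p j \<and> p j \<le> 1"
    and ninf: "filterlim (\<lambda>j. card (V j)) at_top sequentially"
    and small: "p \<in> o(\<lambda>j. (real (card (V j)) / real (Min (card ` Rs j))) powr (-1 / (real f + 1))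
                          / real (Max (card ` Rs j)))"
  shows "(\<lambda>j. measure_pmf.prob (fault_pmf f (V j) (p j))
            {x. \<forall>S\<in>Rs j. f + 1 \<le> card (clean_copies f x S)}) \<longlonglongrightarrow> 1"
    (is "?G \<longlonglongrightarrow> 1")
proof -
  define X where "X j = (real (card (V j)) / real (Min (card ` Rs j))) powr (-1 / (real f + 1))" for j
  define R where "R j = real (Max (card ` Rs j))" for j
  define C where "C = real (ell f choose (f + 1))"
  have lower: "\<forall>\<^sub>F j in sequentially. 1 - C * (p j / (X j / R j)) ^ (f + 1) \<le> ?G j"
    using eventually_card_gt_0[OF ninf]
  proof eventually_elim
    case (elim j)
    then have "V j \<noteq> {}"
      by auto
    note bounds = partition_on_card_bounds[OF fin part this]
    have n: "0 < real (card (V j)) / real (Min (card ` Rs j))"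
      using bounds(1) elim by simp
    have "real (card (Rs j)) \<le> real (card (V j)) / real (Min (card ` Rs j))"
      using bounds(1,3) by (simp add: le_divide_eq of_nat_mult[symmetric] del: of_nat_mult)
    then have "real (card (Rs j)) * (R j * p j) ^ (f + 1) \<le> (R j * p j / X j) ^ (f + 1)"
      unfolding X_def divide_powr_root_power[OF n] using prob[of j]
      by (intro mult_right_mono) (simp_all add: R_def)
    also have "R j * p j / X j = p j / (X j / R j)"
      using bounds(1,2) by (simp add: R_def)
    finally have "real (card (Rs j)) * (R j * p j) ^ (f + 1) \<le> (p j / (X j / R j)) ^ (f + 1)" .
    then have "C * (real (card (Rs j)) * (R j * p j) ^ (f + 1)) \<le> C * (p j / (X j / R j)) ^ (f + 1)"
      by (rule mult_left_mono) (simp add: C_def)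
    moreover have "C * (real (card (Rs j)) * (R j * p j) ^ (f + 1))
                 = real (card (Rs j)) * C * (R j * p j) ^ (f + 1)"
      by (simp only: ac_simps)
    ultimately show ?case
      using prob_all_regions_clean_ge[OF fin[of j] part[of j], where p = "p j" and f = f] prob[of j]
      unfolding C_def R_def by linarith
  qed
  have "(\<lambda>j. p j / (X j / R j)) \<longlonglongrightarrow> 0"
    using smalloD_tendsto[OF small] unfolding X_def R_def .
  then have "(\<lambda>j. 1 - C * (p j / (X j / R j)) ^ (f + 1)) \<longlonglongrightarrow> 1 - C * 0 ^ (f + 1)"
    by (intro tendsto_intros)
  then show ?thesis
    by (intro tendsto_sandwich[OF lower _ _ tendsto_const]) simp_all
qed

lemma prob_faulty_majority_tendsto_1:
  assumes fin: "\<And>j. finite (V j)" and WV: "\<And>j. W j \<subseteq> V j"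
    and prob: "\<And>j. 0 \<le> p j \<and> p j \<le> 1"
    and ninf: "filterlim (\<lambda>j. card (V j)) at_top sequentially"
    and many: "(\<lambda>j. real (card (W j))) \<in> \<Omega>(\<lambda>j. real (card (V j)))"
    and large: "p \<in> \<omega>(\<lambda>j. real (card (V j)) powr (-1 / (real f + 1)))"
  shows "(\<lambda>j. measure_pmf.prob (fault_pmf f (V j) (p j))
            {x. \<exists>v\<in>W j. f < card (faulty_copies f x v)}) \<longlonglongrightarrow> 1"
proof -
  define g where "g j = real (card (V j)) powr (-1 / (real f + 1))" for j
  define NB where "NB j = measure_pmf.prob (fault_pmf f (V j) (p j))
                             {x. \<forall>v\<in>W j. card (faulty_copies f x v) \<le> f}" for j
  note pos = eventually_card_gt_0[OF ninf]
  obtain c where c: "0 < c"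
    and evW: "\<forall>\<^sub>F j in sequentially. c * norm (real (card (V j))) \<le> norm (real (card (W j)))"
    using landau_omega.bigE[OF many] by blast
  from pos evW have "\<forall>\<^sub>F j in sequentially. 0 < card (V j) \<and> c * real (card (V j)) \<le> real (card (W j))"
    by eventually_elim auto
  then have upper: "\<forall>\<^sub>F j in sequentially. NB j \<le> exp (- (c * (p j / g j) ^ (f + 1)))"
  proof eventually_elim
    case (elim j)
    have p: "0 \<le> p j" "p j \<le> 1"
      using prob[of j] by auto
    then have y: "0 \<le> p j ^ (f + 1)" "p j ^ (f + 1) \<le> 1"
      by (simp_all add: power_le_one del: power_Suc)
    have "NB j \<le> (1 - p j ^ (f + 1)) ^ card (W j)"
      unfolding NB_def by (rule prob_no_faulty_majority_le[OF fin WV p])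
    also have "\<dots> \<le> exp (- (real (card (W j)) * p j ^ (f + 1)))"
      using y by (rule one_minus_power_le_exp)
    also have "\<dots> \<le> exp (- (c * (real (card (V j)) * p j ^ (f + 1))))"
      using mult_right_mono[OF conjunct2[OF elim] y(1)] by (simp add: mult.assoc)
    also have "real (card (V j)) * p j ^ (f + 1) = (p j / g j) ^ (f + 1)"
      unfolding g_def using elim by (intro divide_powr_root_power[symmetric]) simp
    finally show ?case .
  qed
  have "\<forall>\<^sub>F j in sequentially. g j \<noteq> 0"
    using pos by eventually_elim (simp add: g_def)
  then have "filterlim (\<lambda>j. norm (p j / g j)) at_top sequentially"
    using smallomegaD_filterlim_at_top_norm[OF large] unfolding g_def by blast
  moreover have "norm (p j / g j) = p j / g j" for j
    using prob[of j] by (simp add: g_def)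
  ultimately have "filterlim (\<lambda>j. p j / g j) at_top sequentially"
    by simp
  then have "filterlim (\<lambda>j. c * (p j / g j) ^ (f + 1)) at_top sequentially"
    by (intro filterlim_tendsto_pos_mult_at_top[OF tendsto_const c] filterlim_pow_at_top) simp_all
  then have "(\<lambda>j. exp (- (c * (p j / g j) ^ (f + 1)))) \<longlonglongrightarrow> 0"
    by (intro filterlim_compose[OF exp_at_bot] filterlim_compose[OF filterlim_uminus_at_bot_at_top])
  then have "NB \<longlonglongrightarrow> 0"
    by (intro tendsto_sandwich[OF _ upper tendsto_const]) (simp_all add: NB_def)
  then have "(\<lambda>j. 1 - NB j) \<longlonglongrightarrow> 1"
    using tendsto_diff[OF tendsto_const, of NB 0 sequentially 1] by simp
  moreover have "1 - NB j = measure_pmf.prob (fault_pmf f (V j) (p j))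
                              {x. \<exists>v\<in>W j. f < card (faulty_copies f x v)}" for j
  proof -
    have "{x. \<exists>v\<in>W j. f < card (faulty_copies f x v)}
        = UNIV - {x. \<forall>v\<in>W j. card (faulty_copies f x v) \<le> f}"
      by (auto simp: not_le)
    then show ?thesis
      using measure_pmf.prob_compl[of "{x. \<forall>v\<in>W j. card (faulty_copies f x v) \<le> f}"
          "fault_pmf f (V j) (p j)"]
      unfolding NB_def by simp
  qed
  ultimately show ?thesis
    by simp
qed

lemma valid_if_prob_all_regions_clean_tendsto_1:
  assumes edges: "\<And>j. E j \<subseteq> V j \<times> V j" and part: "\<And>j. partition_on (V j) (Rs j)"
    and clean: "(\<lambda>j. measure_pmf.prob (fault_pmf f (V j) (p j))
                  {x. \<forall>S\<in>Rs j. f + 1 \<le> card (clean_copies f x S)}) \<longlonglongrightarrow> 1"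
  shows "valid f V E Rs A tb p"
  unfolding valid_def
proof (rule tendsto_sandwich[OF _ _ clean tendsto_const])
  have "{x. \<forall>S\<in>Rs j. f + 1 \<le> card (clean_copies f x S)}
        \<subseteq> {x. \<forall>adv inp. simulates f (V j) (E j) (Rs j) (A j) tb {v'. x v'} adv inp}" for j
    using simulates_if_all_regions_clean[OF edges[of j] part[of j]] by blast
  then show "\<forall>\<^sub>F j in sequentially.
      measure_pmf.prob (fault_pmf f (V j) (p j)) {x. \<forall>S\<in>Rs j. f + 1 \<le> card (clean_copies f x S)}
      \<le> measure_pmf.prob (fault_pmf f (V j) (p j))
          {x. \<forall>adv inp. simulates f (V j) (E j) (Rs j) (A j) tb {v'. x v'} adv inp}"
    by (intro always_eventually allI measure_pmf.finite_measure_mono) auto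
qed simp

lemma not_valid_if_prob_faulty_majority_tendsto_1:
  assumes WV: "\<And>j. W j \<subseteq> V j"
    and faulty: "(\<lambda>j. measure_pmf.prob (fault_pmf f (V j) (p j))
                   {x. \<exists>v\<in>W j. f < card (faulty_copies f x v)}) \<longlonglongrightarrow> 1"
  shows "\<not> valid f V E Rs A tb p"
proof
  define Sim where "Sim j = measure_pmf.prob (fault_pmf f (V j) (p j))
      {x. \<forall>adv inp. simulates f (V j) (E j) (Rs j) (A j) tb {v'. x v'} adv inp}" for j
  define Bad where "Bad j = measure_pmf.prob (fault_pmf f (V j) (p j))
      {x. \<exists>v\<in>W j. f < card (faulty_copies f x v)}" for j
  assume "valid f V E Rs A tb p"
  then have lim1: "Sim \<longlonglongrightarrow> 1"
    unfolding valid_def Sim_def .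
  have upper: "Sim j \<le> 1 - Bad j" for j
  proof -
    have "{x. \<forall>adv inp. simulates f (V j) (E j) (Rs j) (A j) tb {v'. x v'} adv inp}
          \<subseteq> UNIV - {x. \<exists>v\<in>W j. f < card (faulty_copies f x v)}"
      using not_simulates_if_faulty_majority[of _ "V j" f] WV[of j] by blast
    then have "Sim j \<le> measure_pmf.prob (fault_pmf f (V j) (p j))
                   (UNIV - {x. \<exists>v\<in>W j. f < card (faulty_copies f x v)})"
      unfolding Sim_def by (rule measure_pmf.finite_measure_mono) simp
    also have "\<dots> = 1 - Bad j"
      using measure_pmf.prob_compl[of "{x. \<exists>v\<in>W j. f < card (faulty_copies f x v)}"
          "fault_pmf f (V j) (p j)"]
      unfolding Bad_def by simp
    finally show ?thesis .
  qed
  have "Bad \<longlonglongrightarrow> 1"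
    using faulty unfolding Bad_def .
  then have "(\<lambda>j. 1 - Bad j) \<longlonglongrightarrow> 0"
    using tendsto_diff[OF tendsto_const, of Bad 1 sequentially 1] by simp
  moreover have "\<forall>\<^sub>F j in sequentially. 0 \<le> Sim j"
    by (simp add: Sim_def)
  ultimately have "Sim \<longlonglongrightarrow> 0"
    using tendsto_sandwich[of "\<lambda>_. 0" Sim sequentially "\<lambda>j. 1 - Bad j" 0] upper by simp
  with lim1 show False
    using LIMSEQ_unique by force
qed

theorem theorem9:
  fixes f :: nat
    and V :: "nat \<Rightarrow> 'v set" and E :: "nat \<Rightarrow> ('v \<times> 'v) set" and Rs :: "nat \<Rightarrow> 'v set set"
    and p :: "nat \<Rightarrow> real" and tb :: "'m multiset \<Rightarrow> 'm"
  assumes fin: "\<And>j. finite (V j)"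
    and edges: "\<And>j. E j \<subseteq> V j \<times> V j"
    and part: "\<And>j. partition_on (V j) (Rs j)"
    and prob: "\<And>j. 0 \<le> p j \<and> p j \<le> 1"
    and ninf: "filterlim (\<lambda>j. card (V j)) at_top sequentially"
    and Rp: "(\<lambda>j. real (Max (card ` Rs j)) * p j) \<in> o(\<lambda>_. 1)"
  shows "(p \<in> o(\<lambda>j. (real (card (V j)) / real (Min (card ` Rs j))) powr (-1 / (real f + 1))
                     / real (Max (card ` Rs j)))
           \<longrightarrow> ((\<lambda>j. measure_pmf.prob (fault_pmf f (V j) (p j))
                   {x. \<forall>S\<in>Rs j. f + 1 \<le> card {i. i < ell f \<and> (\<forall>v\<in>S. \<not> x (v, i))}}) \<longlonglongrightarrow> 1)
             \<and> (\<forall>A :: nat \<Rightarrow> ('v,'s,'m,'i) alg. valid f V E Rs A tb p))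
       \<and> ((\<lambda>j. real (card {v\<in>V j. \<exists>w. (v, w) \<in> E j})) \<in> \<Omega>(\<lambda>j. real (card (V j)))
           \<and> (\<lambda>j. real (Max (card ` Rs j))) \<in> O(\<lambda>_. 1)
           \<and> p \<in> \<omega>(\<lambda>j. real (card (V j)) powr (-1 / (real f + 1)))
           \<longrightarrow> ((\<lambda>j. measure_pmf.prob (fault_pmf f (V j) (p j))
                   {x. \<exists>v\<in>V j. (\<exists>w. (v, w) \<in> E j) \<and> f < card {i. i < ell f \<and> x (v, i)}}) \<longlonglongrightarrow> 1)
             \<and> (\<forall>A :: nat \<Rightarrow> ('v,'s,'m,'i) alg. \<not> valid f V E Rs A tb p))"
proof -
  let ?W = "\<lambda>j. {v \<in> V j. \<exists>w. (v, w) \<in> E j}"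
  have faulty_eq: "{x. \<exists>v\<in>?W j. f < card (faulty_copies f x v)}
      = {x. \<exists>v\<in>V j. (\<exists>w. (v, w) \<in> E j) \<and> f < card (faulty_copies f x v)}" for j
    by blast
  have WV: "?W j \<subseteq> V j" for j
    by blast
  note clean = prob_all_regions_clean_tendsto_1[where p = p and f = f, OF fin part prob ninf]
    and valid = valid_if_prob_all_regions_clean_tendsto_1[where V = V and E = E and Rs = Rs and p = p
        and f = f, OF edges part]
    and faulty = prob_faulty_majority_tendsto_1[where p = p and f = f, OF fin WV prob ninf]
    and not_valid = not_valid_if_prob_faulty_majority_tendsto_1[where V = V and E = E and Rs = Rs
        and p = p and f = f, OF WV]
  show ?thesis
    using clean valid faulty not_valid unfolding faulty_eq by blast
qed

end
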